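(* Let $(\beta,\alpha)$ satisfy $\beta\in(1,2)$ and $\alpha\in[0,2-\beta]$, and let $f=T_{\beta,\alpha}$, $T_{\beta,\alpha}(x)=\beta x+\alpha \pmod 1$ on $[0,1]$, with critical point $c=\frac{1-\alpha}{\beta}$. Fix $a\in[0,\frac{1-\alpha}{\beta}]$ and for $b\in[c,1]$ consider the hole $H=(a,b)$ and the survivor set $S_f(H)=\{x\in[0,1]: f^n(x)\notin H\ \forall n\ge0\}$. Then the function $\eta_f(a): b\mapsto \dim_{\mathcal H}(S_f(H))$ is a devil staircase, that is, $\eta_f(a)$ is non-increasing and locally constant at Lebesgue-almost every point.
   Context: $\dim_{\mathcal H}$ denotes Hausdorff dimension. *)

theory Defs
  imports "HOL-Analysis.Analysis"
begin

definition diam_pow :: "real \<Rightarrow> real set \<Rightarrow> ennreal" where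
  "diam_pow s U = (if U = {} then 0 else if s = 0 then 1 else ennreal (diameter U powr s))"

definition hausdorff_pre :: "real \<Rightarrow> real \<Rightarrow> real set \<Rightarrow> ennreal" where
  "hausdorff_pre s \<delta> E =
     (INF U \<in> {U :: nat \<Rightarrow> real set. E \<subseteq> (\<Union>i. U i) \<and> (\<forall>i. diameter (U i) \<le> \<delta>)}.
        (\<Sum>i. diam_pow s (U i)))"

definition hausdorff_measure :: "real \<Rightarrow> real set \<Rightarrow> ennreal" where
  "hausdorff_measure s E = (SUP \<delta> \<in> {0<..}. hausdorff_pre s \<delta> E)"

definition hausdorff_dim :: "real set \<Rightarrow> real" where
  "hausdorff_dim E = Inf {s. s \<ge> 0 \<and> hausdorff_measure s E = 0}"

definition T_map :: "real \<Rightarrow> real \<Rightarrow> real \<Rightarrow> real" where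
  "T_map \<beta> \<alpha> x = frac (\<beta> * x + \<alpha>)"

definition survivor_set :: "(real \<Rightarrow> real) \<Rightarrow> real set \<Rightarrow> real set" where
  "survivor_set f H = {x \<in> {0..1}. \<forall>n. (f ^^ n) x \<notin> H}"

end

theory Submission
  imports Defs
begin

(* Enlarging the hole shrinks the survivor set, which gives monotonicity.  For local constancy,
   discard the countably many b whose orbit under f meets the breakpoints c and 1.  If some iterate
   f^n b lies in the hole (a, b), then f^n is affine with slope beta^n near b, so f^n b' lies deep
   inside the hole for all b' near b, and the holes (a, b) and (a, b') remove the same points.
   Otherwise b survives the hole (a, b), hence lies in the survivor set S of a hole (a, b0) with
   c < b0 < b.  Such an S is Lebesgue null: f expands every interval until it meets the hole, so
   windows of a fixed length m miss S in measure at least q > 0; near a point x of S, f^n maps the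
   left window [x - m / beta^n, x] affinely onto such a window and S into S.  So S has left density
   at most 1 - q/m < 1 at each of its points, and a Vitali covering argument shows it is null. *)

section \<open>Hausdorff dimension of subsets of the unit interval\<close>

lemma hausdorff_pre_mono:
  "E \<subseteq> F \<Longrightarrow> hausdorff_pre s \<delta> E \<le> hausdorff_pre s \<delta> F"
  unfolding hausdorff_pre_def by (rule INF_superset_mono) auto

lemma hausdorff_measure_mono:
  "E \<subseteq> F \<Longrightarrow> hausdorff_measure s E \<le> hausdorff_measure s F"
  unfolding hausdorff_measure_def by (intro SUP_mono) (auto intro: hausdorff_pre_mono)

lemma unit_interval_grid_cover:
  fixes x :: real and n :: nat
  assumes x: "x \<in> {0..1}" and "0 < n"
  shows "\<exists>i\<le>n. x \<in> {real i / n .. (real i + 1) / n}"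
proof -
  define i where "i = nat \<lfloor>x * n\<rfloor>"
  have "real i \<le> x * n" "x * n < real i + 1"
    using x by (simp_all add: i_def)
  moreover have "x * n \<le> n"
    using x by (simp add: mult_left_le_one_le)
  then have "i \<le> n"
    by (simp add: i_def nat_le_iff le_floor_iff floor_le_iff)
  ultimately show ?thesis
    using \<open>0 < n\<close> by (intro exI[of _ i]) (simp add: field_simps)
qed

lemma hausdorff_pre_2_unit_interval_le:
  fixes n :: nat
  assumes E: "E \<subseteq> {0..1}" and n: "0 < n" "1 / n \<le> \<delta>"
  shows "hausdorff_pre 2 \<delta> E \<le> ennreal ((real n + 1) / real n ^ 2)"
proof -
  define U where "U i = (if i \<le> n then {real i / n .. (real i + 1) / n} else {})" for i
  have "E \<subseteq> (\<Union>i. U i)"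
  proof
    fix x assume "x \<in> E"
    then obtain i where "i \<le> n" "x \<in> {real i / n .. (real i + 1) / n}"
      using E unit_interval_grid_cover[OF _ n(1)] by blast
    then have "x \<in> U i"
      by (simp add: U_def)
    then show "x \<in> (\<Union>i. U i)" by blast
  qed
  moreover have "0 < 1 / real n"
    using n(1) by simp
  then have "0 \<le> \<delta>"
    using n(2) by linarith
  then have "diameter (U i) \<le> \<delta>" for i
    using n by (auto simp: U_def field_simps)
  ultimately have "hausdorff_pre 2 \<delta> E \<le> (\<Sum>i. diam_pow 2 (U i))"
    unfolding hausdorff_pre_def by (intro INF_lower) auto
  also have "(\<Sum>i. diam_pow 2 (U i)) = (\<Sum>i\<le>n. ennreal (1 / real n ^ 2))"
    using n(1)
    by (subst suminf_finite[of "{..n}"])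
       (auto simp: U_def diam_pow_def powr_numeral add_divide_distrib power_divide)
  also have "\<dots> = ennreal ((real n + 1) / real n ^ 2)"
    by (simp add: ennreal_of_nat_eq_real_of_nat ennreal_mult' divide_inverse add.commute)
  finally show ?thesis .
qed

lemma hausdorff_pre_2_unit_interval:
  assumes E: "E \<subseteq> {0..1}" and "\<delta> > 0"
  shows "hausdorff_pre 2 \<delta> E = 0"
proof -
  have "hausdorff_pre 2 \<delta> E \<le> 0 + ennreal e" if "e > 0" for e
  proof -
    obtain n :: nat where n: "max (1 / \<delta>) (2 / e) < n"
      using reals_Archimedean2 by blast
    then have "1 / \<delta> < n" "2 / e < n"
      by simp_all
    moreover have "0 < 1 / \<delta>"
      using \<open>\<delta> > 0\<close> by simp
    ultimately have "0 < real n"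
      by linarith
    then have n_pos: "0 < n" and "1 \<le> real n" and n_\<delta>: "1 / n \<le> \<delta>"
      using \<open>1 / \<delta> < n\<close> \<open>\<delta> > 0\<close> by (simp_all add: field_simps)
    have "hausdorff_pre 2 \<delta> E \<le> ennreal ((real n + 1) / real n ^ 2)"
      by (rule hausdorff_pre_2_unit_interval_le[OF E n_pos n_\<delta>])
    also have "\<dots> \<le> ennreal e"
    proof (intro ennreal_leI)
      have "2 \<le> e * real n"
        using \<open>2 / e < n\<close> \<open>e > 0\<close> by (simp add: divide_less_eq mult.commute)
      then have "2 * real n \<le> (e * real n) * real n"
        by (intro mult_right_mono) auto
      then have "real n + 1 \<le> e * (real n * real n)"
        using \<open>1 \<le> real n\<close> by (simp only: mult.assoc)
      then show "(real n + 1) / real n ^ 2 \<le> e"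
        using n_pos by (simp add: divide_le_eq power2_eq_square)
    qed
    finally show ?thesis by simp
  qed
  then have "hausdorff_pre 2 \<delta> E \<le> 0" by (rule ennreal_le_epsilon)
  then show ?thesis by simp
qed

lemma hausdorff_measure_2_unit_interval:
  "E \<subseteq> {0..1} \<Longrightarrow> hausdorff_measure 2 E = 0"
  by (simp add: hausdorff_measure_def hausdorff_pre_2_unit_interval)

lemma hausdorff_dim_mono:
  assumes "E \<subseteq> F" "F \<subseteq> {0..1}"
  shows "hausdorff_dim E \<le> hausdorff_dim F"
  unfolding hausdorff_dim_def
proof (rule cInf_superset_mono)
  show "{s. 0 \<le> s \<and> hausdorff_measure s F = 0} \<noteq> {}"
    using hausdorff_measure_2_unit_interval[OF assms(2)] by force
  show "bdd_below {s. 0 \<le> s \<and> hausdorff_measure s E = 0}"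
    by (rule bdd_belowI[of _ 0]) auto
  show "{s. 0 \<le> s \<and> hausdorff_measure s F = 0} \<subseteq> {s. 0 \<le> s \<and> hausdorff_measure s E = 0}"
    using hausdorff_measure_mono[OF assms(1)] by clarsimp (metis le_zero_eq)
qed

section \<open>Sets of left density below one are null\<close>

lemma Vitali_covering_left_intervals:
  fixes T :: "real set"
  assumes fine: "\<And>x d. x \<in> T \<Longrightarrow> 0 < d \<Longrightarrow> \<exists>h. 0 < h \<and> h < d \<and> P x h"
  obtains C where "countable C" "\<And>i. i \<in> C \<Longrightarrow> fst i \<in> T \<and> 0 < snd i \<and> P (fst i) (snd i)"
    "pairwise (\<lambda>i j. disjnt {fst i - snd i..fst i} {fst j - snd j..fst j}) C"
    "negligible (T - (\<Union>i\<in>C. {fst i - snd i..fst i}))"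
proof -
  define K where "K = {i. fst i \<in> T \<and> 0 < snd i \<and> P (fst i) (snd i)}"
  have cball: "cball (fst i - snd i / 2) (snd i / 2) = {fst i - snd i..fst i}" for i :: "real \<times> real"
    by (simp add: cball_eq_atLeastAtMost)
  have "0 < snd i / 2" if "i \<in> K" for i
    using that by (simp add: K_def)
  moreover have "\<exists>i. i \<in> K \<and> x \<in> cball (fst i - snd i / 2) (snd i / 2) \<and> snd i / 2 < d"
    if x: "x \<in> T" and d: "0 < d" for x d
  proof -
    obtain h where "0 < h" "h < d" "P x h"
      using fine[OF x d] by blast
    with x show ?thesis
      by (intro exI[of _ "(x, h)"]) (simp add: K_def cball)
  qed
  ultimately obtain C where C: "countable C" "C \<subseteq> K"
    "pairwise (\<lambda>i j. disjnt (cball (fst i - snd i / 2) (snd i / 2)) (cball (fst j - snd j / 2) (snd j / 2))) C"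
    "negligible (T - (\<Union>i\<in>C. cball (fst i - snd i / 2) (snd i / 2)))"
    by (rule Vitali_covering_theorem_cballs[of K "\<lambda>i. snd i / 2" T "\<lambda>i. fst i - snd i / 2"])
  show ?thesis
  proof (rule that[OF C(1)])
    show "\<And>i. i \<in> C \<Longrightarrow> fst i \<in> T \<and> 0 < snd i \<and> P (fst i) (snd i)"
      using C(2) by (auto simp: K_def)
    show "pairwise (\<lambda>i j. disjnt {fst i - snd i..fst i} {fst j - snd j..fst j}) C"
      using C(3) by (simp only: cball)
    show "negligible (T - (\<Union>i\<in>C. {fst i - snd i..fst i}))"
      using C(4) by (simp only: cball)
  qed
qed

lemma measure_le_of_disjoint_cover:
  fixes T U :: "'a::euclidean_space set"
  assumes T: "T \<in> lmeasurable" and U: "U \<in> lmeasurable" and "0 \<le> \<theta>"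
    and C: "countable C" "pairwise (\<lambda>i j. disjnt (I i) (I j)) C"
    and I: "\<And>i. i \<in> C \<Longrightarrow> I i \<in> sets lebesgue" "\<And>i. i \<in> C \<Longrightarrow> I i \<subseteq> U"
      "\<And>i. i \<in> C \<Longrightarrow> measure lebesgue (T \<inter> I i) \<le> \<theta> * measure lebesgue (I i)"
    and null: "negligible (T - (\<Union>i\<in>C. I i))"
  shows "measure lebesgue T \<le> \<theta> * measure lebesgue U"
proof -
  let ?\<mu> = "measure lebesgue"
  have I_measurable: "I i \<in> lmeasurable" if "i \<in> C" for i
    using I(1,2)[OF that] by (rule fmeasurableI2[OF U, rotated])
  have TI_measurable: "T \<inter> I i \<in> lmeasurable" if "i \<in> C" for i
    using T I_measurable[OF that] by (rule fmeasurable.Int)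
  have finite_bound: "?\<mu> (\<Union>i\<in>F. T \<inter> I i) \<le> \<theta> * ?\<mu> U" if F: "F \<subseteq> C" "finite F" for F
  proof -
    have "?\<mu> (\<Union>i\<in>F. T \<inter> I i) \<le> (\<Sum>i\<in>F. ?\<mu> (T \<inter> I i))"
      using TI_measurable F by (intro measure_UNION_le) (auto simp: fmeasurable_def)
    also have "\<dots> \<le> \<theta> * (\<Sum>i\<in>F. ?\<mu> (I i))"
      using I(3) F unfolding sum_distrib_left by (intro sum_mono) auto
    also have "(\<Sum>i\<in>F. ?\<mu> (I i)) = ?\<mu> (\<Union>i\<in>F. I i)"
      using C(2) I_measurable F by (intro measure_UNION'[symmetric]) (auto elim: pairwise_subset)
    also have "?\<mu> (\<Union>i\<in>F. I i) \<le> ?\<mu> U"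
    proof (rule measure_mono_fmeasurable[OF _ _ U])
      show "(\<Union>i\<in>F. I i) \<subseteq> U" using I(2) F(1) by blast
      show "(\<Union>i\<in>F. I i) \<in> sets lebesgue" using I(1) F by (intro sets.finite_UN) auto
    qed
    finally show ?thesis using \<open>0 \<le> \<theta>\<close> by (simp add: mult_left_mono)
  qed
  define V where "V = (\<Union>i\<in>C. T \<inter> I i)"
  have V_measurable: "V \<in> lmeasurable"
    unfolding V_def by (rule fmeasurable_UN_bound[OF C(1) TI_measurable finite_bound])
  have "T = V \<union> (T - (\<Union>i\<in>C. I i))" by (auto simp: V_def)
  moreover have "?\<mu> (V \<union> (T - (\<Union>i\<in>C. I i))) = ?\<mu> V"
    using V_measurable null
    by (intro measure_Un_null_set) (auto simp: fmeasurable_def negligible_iff_null_sets)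
  moreover have "?\<mu> V \<le> \<theta> * ?\<mu> U"
    unfolding V_def by (rule measure_UN_bound[OF C(1) TI_measurable finite_bound])
  ultimately show ?thesis by simp
qed

lemma measure_le_of_left_density_le:
  fixes T U :: "real set"
  assumes T: "T \<in> lmeasurable" and U: "open U" "T \<subseteq> U" "U \<in> lmeasurable" and "0 \<le> \<theta>"
    and density: "\<And>x d. x \<in> T \<Longrightarrow> d > 0 \<Longrightarrow>
                    \<exists>h. 0 < h \<and> h < d \<and> measure lebesgue (T \<inter> {x-h..x}) \<le> \<theta> * h"
  shows "measure lebesgue T \<le> \<theta> * measure lebesgue U"
proof -
  let ?\<mu> = "measure lebesgue"
  define I where "I i = {fst i - snd i..fst i}" for i :: "real \<times> real"
  have "\<exists>h. 0 < h \<and> h < d \<and> {x-h..x} \<subseteq> U \<and> ?\<mu> (T \<inter> {x-h..x}) \<le> \<theta> * h"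
    if x: "x \<in> T" and "0 < d" for x d
  proof -
    obtain \<rho> where \<rho>: "\<rho> > 0" "ball x \<rho> \<subseteq> U"
      using U(1,2) x openE by blast
    obtain h where h: "0 < h" "h < min d \<rho>" "?\<mu> (T \<inter> {x-h..x}) \<le> \<theta> * h"
      using density[OF x, of "min d \<rho>"] \<open>0 < d\<close> \<rho>(1) by auto
    have "{x-h..x} \<subseteq> ball x \<rho>"
      using h(1,2) by (auto simp: dist_real_def)
    with h \<rho>(2) show ?thesis
      by (intro exI[of _ h]) auto
  qed
  then obtain C where C: "countable C" "pairwise (\<lambda>i j. disjnt (I i) (I j)) C"
    and null: "negligible (T - (\<Union>i\<in>C. I i))"
    and K: "\<And>i. i \<in> C \<Longrightarrow> I i \<subseteq> U \<and> ?\<mu> (T \<inter> I i) \<le> \<theta> * ?\<mu> (I i)"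
    unfolding I_def
    by (rule Vitali_covering_left_intervals[where P = "\<lambda>x h. {x-h..x} \<subseteq> U \<and> ?\<mu> (T \<inter> {x-h..x}) \<le> \<theta> * h"])
       auto
  show ?thesis
  proof (rule measure_le_of_disjoint_cover[OF T U(3) \<open>0 \<le> \<theta>\<close> C _ _ _ null])
    show "I i \<in> sets lebesgue" for i
      by (simp add: I_def)
  qed (use K in auto)
qed

lemma negligible_of_left_density_le:
  fixes T :: "real set"
  assumes T: "T \<in> lmeasurable" and \<theta>: "0 \<le> \<theta>" "\<theta> < 1"
    and density: "\<And>x d. x \<in> T \<Longrightarrow> d > 0 \<Longrightarrow>
                    \<exists>h. 0 < h \<and> h < d \<and> measure lebesgue (T \<inter> {x-h..x}) \<le> \<theta> * h"
  shows "negligible T"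
proof -
  let ?\<mu> = "measure lebesgue"
  have "T \<in> sets lebesgue" using T by (simp add: fmeasurable_def)
  have "?\<mu> T \<le> \<theta> * ?\<mu> T + e" if "e > 0" for e
  proof -
    obtain U where U: "open U" "T \<subseteq> U" "U - T \<in> lmeasurable" "emeasure lebesgue (U - T) < ennreal e"
      using sets_lebesgue_outer_open[OF \<open>T \<in> sets lebesgue\<close> \<open>e > 0\<close>] by metis
    have U_eq: "U = T \<union> (U - T)" using U(2) by auto
    have "U \<in> lmeasurable" using T U(3) by (subst U_eq) (rule fmeasurable.Un)
    have "?\<mu> (U - T) < e"
      using U(3,4) \<open>e > 0\<close> by (simp add: emeasure_eq_measure2 ennreal_less_iff)
    moreover have "?\<mu> U \<le> ?\<mu> T + ?\<mu> (U - T)"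
      using T U(3) by (subst U_eq) (intro measure_Un_le, auto simp: fmeasurable_def)
    ultimately have "?\<mu> U \<le> ?\<mu> T + e" by linarith
    have "?\<mu> T \<le> \<theta> * ?\<mu> U"
      using measure_le_of_left_density_le[OF T U(1,2) \<open>U \<in> lmeasurable\<close> \<theta>(1) density] .
    also have "\<dots> \<le> \<theta> * (?\<mu> T + e)"
      using \<open>?\<mu> U \<le> ?\<mu> T + e\<close> \<theta>(1) by (rule mult_left_mono)
    also have "\<dots> \<le> \<theta> * ?\<mu> T + e"
      using \<theta> \<open>e > 0\<close> by (simp add: distrib_left mult_left_le_one_le)
    finally show ?thesis .
  qed
  then have "?\<mu> T \<le> \<theta> * ?\<mu> T" by (rule field_le_epsilon)
  then have "(1 - \<theta>) * ?\<mu> T \<le> 0" by (simp add: algebra_simps)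
  then have "?\<mu> T \<le> 0" using \<theta>(2) by (simp add: mult_le_0_iff)
  then have "?\<mu> T = 0" using measure_nonneg[of lebesgue T] by linarith
  then show ?thesis using T by (simp add: negligible_iff_measure0)
qed

lemma negligible_affine_image:
  fixes X :: "real set"
  assumes "negligible X"
  shows "negligible ((\<lambda>y. p * y + q) ` X)"
proof (rule negligible_differentiable_image_negligible[OF _ assms])
  have "((\<lambda>y. p * y + q) has_derivative (\<lambda>h. p * h)) (at x within X)" for x
    by (auto intro!: derivative_eq_intros)
  then show "(\<lambda>y. p * y + q) differentiable_on X"
    by (auto simp: differentiable_on_def differentiable_def)
qed simp

section \<open>Survivor sets\<close>

lemma survivor_set_subset: "survivor_set f H \<subseteq> {0..1}"
  by (auto simp: survivor_set_def)

lemma survivor_set_not_in_hole: "x \<in> survivor_set f H \<Longrightarrow> x \<notin> H"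
  unfolding survivor_set_def by (metis (mono_tags, lifting) funpow_0 mem_Collect_eq)

lemma survivor_set_antimono: "H \<subseteq> H' \<Longrightarrow> survivor_set f H' \<subseteq> survivor_set f H"
  by (auto simp: survivor_set_def)

lemma funpow_in_survivor_set:
  assumes maps: "\<And>x. x \<in> {0..1} \<Longrightarrow> f x \<in> {0..1}" and x: "x \<in> survivor_set f H"
  shows "(f ^^ n) x \<in> survivor_set f H"
proof -
  have "x \<in> {0..1}"
    using x survivor_set_subset by blast
  then have "(f ^^ n) x \<in> {0..1}"
    by (induction n) (simp_all del: atLeastAtMost_iff add: maps)
  moreover have "(f ^^ k) ((f ^^ n) x) \<notin> H" for k
  proof -
    have "(f ^^ k) ((f ^^ n) x) = (f ^^ (k + n)) x" by (simp add: funpow_add)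
    then show ?thesis using x by (simp add: survivor_set_def)
  qed
  ultimately show ?thesis by (simp add: survivor_set_def)
qed

lemma survivor_set_borel:
  assumes "f \<in> borel_measurable borel" "H \<in> sets borel"
  shows "survivor_set f H \<in> sets borel"
proof -
  have "survivor_set f H = {0..1} \<inter> (\<Inter>n. (f ^^ n) -` (- H))"
    by (auto simp: survivor_set_def)
  moreover have "(f ^^ n) -` (- H) \<in> sets borel" for n
    using assms by (intro measurable_sets_borel[OF measurable_compose_n]) auto
  ultimately show ?thesis by auto
qed

lemma survivor_set_eq_if_returns:
  assumes maps: "\<And>x. x \<in> {0..1} \<Longrightarrow> f x \<in> {0..1}" and "b\<^sub>1 \<le> b\<^sub>2"
    and returns: "\<And>w. w \<in> {0..1} \<Longrightarrow> b\<^sub>1 \<le> w \<Longrightarrow> w < b\<^sub>2 \<Longrightarrow> \<exists>n. (f ^^ n) w \<in> {a<..<b\<^sub>1}"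
  shows "survivor_set f {a<..<b\<^sub>2} = survivor_set f {a<..<b\<^sub>1}"
proof
  show "survivor_set f {a<..<b\<^sub>2} \<subseteq> survivor_set f {a<..<b\<^sub>1}"
    using \<open>b\<^sub>1 \<le> b\<^sub>2\<close> by (intro survivor_set_antimono) auto
  show "survivor_set f {a<..<b\<^sub>1} \<subseteq> survivor_set f {a<..<b\<^sub>2}"
  proof
    fix x assume x: "x \<in> survivor_set f {a<..<b\<^sub>1}"
    have "(f ^^ k) x \<notin> {a<..<b\<^sub>2}" for k
    proof
      assume in_hole: "(f ^^ k) x \<in> {a<..<b\<^sub>2}"
      have survivor: "(f ^^ k) x \<in> survivor_set f {a<..<b\<^sub>1}"
        using funpow_in_survivor_set[OF maps x] .
      have "(f ^^ k) x \<notin> {a<..<b\<^sub>1}"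
        using survivor by (rule survivor_set_not_in_hole)
      then have "b\<^sub>1 \<le> (f ^^ k) x" "(f ^^ k) x < b\<^sub>2"
        using in_hole by auto
      moreover have "(f ^^ k) x \<in> {0..1}"
        using survivor survivor_set_subset by blast
      ultimately obtain n where "(f ^^ n) ((f ^^ k) x) \<in> {a<..<b\<^sub>1}"
        using returns by blast
      moreover have "(f ^^ n) ((f ^^ k) x) \<in> survivor_set f {a<..<b\<^sub>1}"
        using funpow_in_survivor_set[OF maps survivor] .
      ultimately show False
        using survivor_set_not_in_hole by blast
    qed
    then show "x \<in> survivor_set f {a<..<b\<^sub>2}"
      using x by (simp add: survivor_set_def)
  qed
qed

section \<open>The linear mod one transformation\<close>

locale linear_mod_one =
  fixes \<beta> \<alpha> :: real
  assumes beta_gt_1: "1 < \<beta>" and alpha_nonneg: "0 \<le> \<alpha>" and alpha_le: "\<alpha> \<le> 2 - \<beta>"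
begin

abbreviation f :: "real \<Rightarrow> real" where "f \<equiv> T_map \<beta> \<alpha>"

definition c :: real where "c = (1 - \<alpha>) / \<beta>"

lemma beta_pos: "0 < \<beta>"
  using beta_gt_1 by simp

lemma beta_c: "\<beta> * c + \<alpha> = 1"
  using beta_pos by (simp add: c_def)

lemma c_pos: "0 < c"
  using beta_gt_1 alpha_le by (simp add: c_def)

lemma T_map_in_unit_interval: "f x \<in> {0..1}"
  by (simp add: T_map_def frac_lt_1 less_imp_le)

lemma T_map_left: "0 \<le> y \<Longrightarrow> y < c \<Longrightarrow> f y = \<beta> * y + \<alpha>"
proof -
  assume y: "0 \<le> y" "y < c"
  have "\<beta> * y < \<beta> * c"
    using y(2) beta_pos by simp
  then have "\<beta> * y + \<alpha> < 1"
    using beta_c by linarith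
  moreover have "0 \<le> \<beta> * y + \<alpha>"
    using y(1) alpha_nonneg beta_pos by simp
  ultimately show ?thesis
    by (simp add: T_map_def frac_eq)
qed

lemma T_map_right: "c \<le> y \<Longrightarrow> y < 1 \<Longrightarrow> f y = \<beta> * y + \<alpha> - 1"
proof -
  assume y: "c \<le> y" "y < 1"
  have "\<beta> * c \<le> \<beta> * y" "\<beta> * y < \<beta>"
    using y beta_pos by simp_all
  then have "1 \<le> \<beta> * y + \<alpha>" "\<beta> * y + \<alpha> < 2"
    using beta_c alpha_le by linarith+
  then show ?thesis
    unfolding T_map_def by (simp add: frac_unique_iff)
qed

lemma T_map_measurable: "f \<in> borel_measurable borel"
  unfolding T_map_def[abs_def] frac_def by measurable

definition same_branch :: "real \<Rightarrow> real \<Rightarrow> bool" where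
  "same_branch w w' \<longleftrightarrow> (w \<in> {0..<c} \<and> w' \<in> {0..<c}) \<or> (w \<in> {c..<1} \<and> w' \<in> {c..<1})"

lemma T_map_diff_same_branch: "same_branch w w' \<Longrightarrow> f w' - f w = \<beta> * (w' - w)"
  by (auto simp: same_branch_def T_map_left T_map_right algebra_simps)

lemma same_branch_nhd:
  assumes "z \<in> {0..1}" "z \<noteq> c" "z \<noteq> 1"
  shows "\<exists>r>0. \<forall>w\<in>{0..1}. \<bar>w - z\<bar> < r \<longrightarrow> same_branch z w"
proof (cases "z < c")
  case True
  then show ?thesis
    using assms by (intro exI[of _ "c - z"]) (auto simp: same_branch_def)
next
  case False
  then show ?thesis
    using assms by (intro exI[of _ "min (z - c) (1 - z)"]) (auto simp: same_branch_def)
qed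

lemma funpow_T_map_affine_nhd:
  assumes b: "b \<in> {0..1}" and avoids: "\<And>k. k < n \<Longrightarrow> (f ^^ k) b \<notin> {c, 1}"
  shows "\<exists>e>0. \<forall>y\<in>{0..1}. \<bar>y - b\<bar> < e \<longrightarrow> (f ^^ n) y - (f ^^ n) b = \<beta> ^ n * (y - b)"
  using avoids
proof (induction n)
  case 0
  then show ?case by (intro exI[of _ 1]) auto
next
  case (Suc n)
  then obtain e where e: "e > 0"
    and affine: "\<And>y. y \<in> {0..1} \<Longrightarrow> \<bar>y - b\<bar> < e \<Longrightarrow> (f ^^ n) y - (f ^^ n) b = \<beta> ^ n * (y - b)"
    by auto
  have "(f ^^ n) b \<in> {0..1}"
    using b T_map_in_unit_interval by (cases n) auto
  then obtain r where r: "r > 0"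
    and branch: "\<And>w. w \<in> {0..1} \<Longrightarrow> \<bar>w - (f ^^ n) b\<bar> < r \<Longrightarrow> same_branch ((f ^^ n) b) w"
    using same_branch_nhd Suc.prems[of n] by blast
  have \<beta>n: "\<beta> ^ n > 0" using beta_pos by simp
  show ?case
  proof (intro exI[of _ "min e (r / \<beta> ^ n)"] conjI ballI impI)
    show "min e (r / \<beta> ^ n) > 0" using e r \<beta>n by simp
    fix y assume y: "y \<in> {0..1}" "\<bar>y - b\<bar> < min e (r / \<beta> ^ n)"
    then have "\<beta> ^ n * \<bar>y - b\<bar> < r"
      using \<beta>n by (simp add: field_simps)
    moreover have diff: "(f ^^ n) y - (f ^^ n) b = \<beta> ^ n * (y - b)"
      using affine y by simp
    moreover have "(f ^^ n) y \<in> {0..1}"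
      using y(1) T_map_in_unit_interval by (cases n) auto
    ultimately have "same_branch ((f ^^ n) b) ((f ^^ n) y)"
      using \<beta>n by (intro branch) (auto simp: abs_mult)
    then have "f ((f ^^ n) y) - f ((f ^^ n) b) = \<beta> * (\<beta> ^ n * (y - b))"
      by (simp only: T_map_diff_same_branch diff)
    then show "(f ^^ Suc n) y - (f ^^ Suc n) b = \<beta> ^ Suc n * (y - b)"
      by simp
  qed
qed

lemma finite_T_map_preimage: "finite {y \<in> {0..1}. f y = w}"
proof -
  have "{y \<in> {0..1}. f y = w} \<subseteq> (\<lambda>k::int. (w + k - \<alpha>) / \<beta>) ` {0..2}"
  proof
    fix y assume y: "y \<in> {y \<in> {0..1}. f y = w}"
    define k where "k = \<lfloor>\<beta> * y + \<alpha>\<rfloor>"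
    have "0 \<le> \<beta> * y" "\<beta> * y \<le> \<beta>"
      using y beta_pos by (auto intro: mult_left_le)
    then have "0 \<le> \<beta> * y + \<alpha>" "\<beta> * y + \<alpha> < 3"
      using alpha_nonneg alpha_le by linarith+
    then have "k \<in> {0..2}"
      by (auto simp: k_def floor_less_iff)
    moreover have "y = (w + k - \<alpha>) / \<beta>"
      using y beta_pos by (simp add: T_map_def k_def frac_def field_simps)
    ultimately show "y \<in> (\<lambda>k::int. (w + k - \<alpha>) / \<beta>) ` {0..2}" by blast
  qed
  then show ?thesis by (rule finite_subset) simp
qed

lemma finite_funpow_T_map_preimage: "finite F \<Longrightarrow> finite {y \<in> {0..1}. (f ^^ k) y \<in> F}"
proof (induction k arbitrary: F)
  case 0
  then show ?case by (auto intro: finite_subset[of _ F])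
next
  case (Suc k)
  have "{y \<in> {0..1}. (f ^^ Suc k) y \<in> F} \<subseteq>
        (\<Union>w\<in>{w \<in> {0..1}. (f ^^ k) w \<in> F}. {y \<in> {0..1}. f y = w})"
    using T_map_in_unit_interval by (auto simp: funpow_swap1)
  moreover have "finite (\<Union>w\<in>{w \<in> {0..1}. (f ^^ k) w \<in> F}. {y \<in> {0..1}. f y = w})"
    using Suc by (intro finite_UN_I finite_T_map_preimage) auto
  ultimately show ?case by (rule finite_subset)
qed

definition breakpoint_preimages :: "real set" where
  "breakpoint_preimages = {y \<in> {0..1}. \<exists>k. (f ^^ k) y \<in> {c, 1}}"

lemma countable_breakpoint_preimages: "countable breakpoint_preimages"
proof -
  have "breakpoint_preimages = (\<Union>k. {y \<in> {0..1}. (f ^^ k) y \<in> {c, 1}})"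
    by (auto simp: breakpoint_preimages_def)
  also have "countable \<dots>"
    by (rule countable_UN[OF countableI_type])
       (intro countable_finite finite_funpow_T_map_preimage, simp)
  finally show ?thesis .
qed

lemma survivor_set_locally_constant:
  assumes b: "b \<in> {0..1}" "b \<notin> breakpoint_preimages" "b \<notin> survivor_set f {a<..<b}"
  shows "\<exists>e>0. \<forall>y\<in>{0..1}. \<bar>y - b\<bar> < e \<longrightarrow> survivor_set f {a<..<y} = survivor_set f {a<..<b}"
proof -
  obtain n where hit: "(f ^^ n) b \<in> {a<..<b}"
    using b(1,3) by (auto simp: survivor_set_def)
  have "(f ^^ k) b \<notin> {c, 1}" for k
    using b by (auto simp: breakpoint_preimages_def)
  then obtain e\<^sub>0 where "e\<^sub>0 > 0"
    and affine: "\<And>y. y \<in> {0..1} \<Longrightarrow> \<bar>y - b\<bar> < e\<^sub>0 \<Longrightarrow> (f ^^ n) y - (f ^^ n) b = \<beta> ^ n * (y - b)"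
    using funpow_T_map_affine_nhd[OF b(1)] by blast
  have \<beta>n: "\<beta> ^ n > 0" using beta_pos by simp
  define e where "e = min e\<^sub>0 (min (((f ^^ n) b - a) / \<beta> ^ n) ((b - (f ^^ n) b) / (\<beta> ^ n + 1)))"
  have "e > 0"
    using \<open>e\<^sub>0 > 0\<close> hit \<beta>n by (simp add: e_def)
  txt \<open>The margin \<open>e\<close> below \<open>b\<close> puts \<open>f\<^sup>n w\<close> into the hole \<open>(a, y)\<close>
    for every \<open>y\<close> within \<open>e\<close> of \<open>b\<close>.\<close>
  have returns: "(f ^^ n) w \<in> {a<..<b - e}" if "w \<in> {0..1}" "\<bar>w - b\<bar> < e" for w
  proof -
    have "e \<le> ((f ^^ n) b - a) / \<beta> ^ n" "e \<le> (b - (f ^^ n) b) / (\<beta> ^ n + 1)"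
      by (simp_all add: e_def)
    then have "\<beta> ^ n * e \<le> (f ^^ n) b - a" "\<beta> ^ n * e + e \<le> b - (f ^^ n) b"
      using \<beta>n by (simp_all add: pos_le_divide_eq algebra_simps add_pos_pos)
    moreover have "\<bar>(f ^^ n) w - (f ^^ n) b\<bar> < \<beta> ^ n * e"
      using affine[of w] that \<beta>n by (simp add: e_def abs_mult)
    ultimately show ?thesis
      by (simp only: abs_less_iff greaterThanLessThan_iff) linarith
  qed
  show ?thesis
  proof (intro exI[of _ e] conjI ballI impI \<open>e > 0\<close>)
    fix y assume y: "y \<in> {0..1}" "\<bar>y - b\<bar> < e"
    have "survivor_set f {a<..<max y b} = survivor_set f {a<..<min y b}"
    proof (rule survivor_set_eq_if_returns[OF T_map_in_unit_interval])
      fix w assume "w \<in> {0..1}" "min y b \<le> w" "w < max y b"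
      then have "(f ^^ n) w \<in> {a<..<b - e}"
        using y by (intro returns) auto
      moreover have "b - e < min y b" using y \<open>e > 0\<close> by auto
      ultimately show "\<exists>n. (f ^^ n) w \<in> {a<..<min y b}" by auto
    qed simp
    then show "survivor_set f {a<..<y} = survivor_set f {a<..<b}"
      by (cases "y \<le> b") (simp_all add: min_def max_def)
  qed
qed

end

section \<open>Survivor sets of holes reaching beyond the critical point are null\<close>

locale linear_mod_one_hole = linear_mod_one +
  fixes a b :: real
  assumes a_le_c: "a \<le> c" and c_lt_b: "c < b"
begin

abbreviation S :: "real set" where "S \<equiv> survivor_set f {a<..<b}"

lemma funpow_in_S: "x \<in> S \<Longrightarrow> (f ^^ n) x \<in> S"
  by (rule funpow_in_survivor_set[OF T_map_in_unit_interval])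

lemma S_sets_borel: "S \<in> sets borel"
  by (rule survivor_set_borel[OF T_map_measurable]) simp

lemma S_sets_lebesgue: "S \<in> sets lebesgue"
  using S_sets_borel by (simp add: sets_completionI_sets)

lemma interval_diff_S_lmeasurable: "{u..v} - S \<in> lmeasurable"
proof (rule fmeasurableI2[of "{u..v}"])
  show "{u..v} - S \<in> sets lebesgue"
    using S_sets_lebesgue by (intro sets.Diff) auto
qed auto

lemma S_inter_interval_lmeasurable: "S \<inter> {u..v} \<in> lmeasurable"
proof (rule fmeasurableI2[of "{u..v}"])
  show "S \<inter> {u..v} \<in> sets lebesgue"
    using S_sets_lebesgue by (rule sets.Int) simp
qed auto

lemma negligible_branch_image_diff_S:
  assumes branch: "\<And>y. y \<in> {u..<v} \<Longrightarrow> f y = \<beta> * y + q"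
    and negligible: "negligible ({u..v} - S)"
  shows "negligible ({\<beta> * u + q .. \<beta> * v + q} - S)"
proof (rule negligible_subset)
  show "negligible ((\<lambda>y. \<beta> * y + q) ` ({u..v} - S) \<union> {\<beta> * v + q})"
    using negligible_affine_image[OF negligible] by simp
  show "{\<beta> * u + q .. \<beta> * v + q} - S \<subseteq> (\<lambda>y. \<beta> * y + q) ` ({u..v} - S) \<union> {\<beta> * v + q}"
  proof
    fix t assume t: "t \<in> {\<beta> * u + q .. \<beta> * v + q} - S"
    show "t \<in> (\<lambda>y. \<beta> * y + q) ` ({u..v} - S) \<union> {\<beta> * v + q}"
    proof (cases "t = \<beta> * v + q")
      case False
      define y where "y = (t - q) / \<beta>"
      have t_eq: "t = \<beta> * y + q"
        using beta_pos by (simp add: y_def)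
      have y: "y \<in> {u..<v}"
        using t False beta_pos by (auto simp: y_def field_simps)
      have "y \<notin> S"
        using funpow_in_S[of y 1] t branch[OF y] t_eq by auto
      with y t_eq show ?thesis by auto
    qed simp
  qed
qed

lemma not_negligible_interval_diff_S_meeting_hole:
  assumes "u < v" "u < b" "a < v"
  shows "\<not> negligible ({u..v} - S)"
proof
  assume negligible: "negligible ({u..v} - S)"
  have "{max u a<..<min v b} \<noteq> {}"
    using assms a_le_c c_lt_b by auto
  then have "\<not> negligible {max u a<..<min v b}"
    by (intro open_not_negligible) simp_all
  moreover have "S \<inter> {a<..<b} = {}"
    using survivor_set_not_in_hole by blast
  then have "{max u a<..<min v b} \<subseteq> {u..v} - S"
    by auto
  ultimately show False
    using negligible negligible_subset by blast
qed

lemma interval_diff_S_expands: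
  assumes uv: "0 \<le> u" "u < v" "v \<le> 1" and negligible: "negligible ({u..v} - S)"
  shows "\<exists>u' v'. 0 \<le> u' \<and> u' < v' \<and> v' \<le> 1 \<and> v' - u' = \<beta> * (v - u) \<and> negligible ({u'..v'} - S)"
proof -
  have \<beta>uv: "\<beta> * u < \<beta> * v" "\<beta> * v - \<beta> * u = \<beta> * (v - u)"
    using uv beta_pos by (simp_all add: algebra_simps)
  consider "v \<le> a" | "b \<le> u" | "u < b" "a < v" by linarith
  then show ?thesis
  proof cases
    case 1
    have "f y = \<beta> * y + \<alpha>" if "y \<in> {u..<v}" for y
      using that uv 1 a_le_c by (intro T_map_left) auto
    then have "negligible ({\<beta> * u + \<alpha> .. \<beta> * v + \<alpha>} - S)"
      using negligible_branch_image_diff_S negligible by blast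
    moreover have "\<beta> * v \<le> \<beta> * c"
      using 1 a_le_c beta_pos by simp
    then have "\<beta> * v + \<alpha> \<le> 1"
      using beta_c by linarith
    moreover have "0 \<le> \<beta> * u + \<alpha>"
      using uv beta_pos alpha_nonneg by simp
    ultimately show ?thesis
      using \<beta>uv by (intro exI[of _ "\<beta> * u + \<alpha>"] exI[of _ "\<beta> * v + \<alpha>"]) auto
  next
    case 2
    have "f y = \<beta> * y + (\<alpha> - 1)" if "y \<in> {u..<v}" for y
      using that uv 2 c_lt_b by (subst T_map_right) auto
    then have "negligible ({\<beta> * u + (\<alpha> - 1) .. \<beta> * v + (\<alpha> - 1)} - S)"
      using negligible_branch_image_diff_S negligible by blast
    moreover have "\<beta> * c \<le> \<beta> * u" "\<beta> * v \<le> \<beta>"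
      using 2 c_lt_b uv beta_pos by simp_all
    then have "0 \<le> \<beta> * u + (\<alpha> - 1)" "\<beta> * v + (\<alpha> - 1) \<le> 1"
      using beta_c alpha_le by linarith+
    ultimately show ?thesis
      using \<beta>uv by (intro exI[of _ "\<beta> * u + (\<alpha> - 1)"] exI[of _ "\<beta> * v + (\<alpha> - 1)"]) auto
  next
    case 3
    then show ?thesis
      using not_negligible_interval_diff_S_meeting_hole[OF uv(2)] negligible by blast
  qed
qed

text \<open>An interval missing \<open>S\<close> only in a null set cannot meet the hole, so a branch of \<open>f\<close>
  stretches it by the factor \<open>\<beta>\<close> into another such interval; eventually it would be longer
  than \<open>[0, 1]\<close>.\<close>
lemma not_negligible_interval_diff_S:
  assumes uv: "0 \<le> u" "u < v" "v \<le> 1"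
  shows "\<not> negligible ({u..v} - S)"
proof
  assume negligible: "negligible ({u..v} - S)"
  have stretched: "\<exists>u' v'. 0 \<le> u' \<and> u' < v' \<and> v' \<le> 1 \<and> v' - u' = \<beta> ^ n * (v - u) \<and> negligible ({u'..v'} - S)" for n
  proof (induction n)
    case 0
    then show ?case using uv negligible by auto
  next
    case (Suc n)
    then obtain u' v' where uv': "0 \<le> u'" "u' < v'" "v' \<le> 1" "negligible ({u'..v'} - S)"
      and "v' - u' = \<beta> ^ n * (v - u)" by blast
    obtain u'' v'' where "0 \<le> u''" "u'' < v''" "v'' \<le> 1" "v'' - u'' = \<beta> * (v' - u')"
      and "negligible ({u''..v''} - S)"
      using interval_diff_S_expands[OF uv'] by blast
    with \<open>v' - u' = \<beta> ^ n * (v - u)\<close> show ?case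
      by (intro exI[of _ u''] exI[of _ v'']) (simp add: mult.assoc)
  qed
  obtain n where "1 / (v - u) < \<beta> ^ n"
    using real_arch_pow[OF beta_gt_1] by blast
  then have "1 < \<beta> ^ n * (v - u)"
    using uv by (simp add: field_simps)
  moreover obtain u' v' where "0 \<le> u'" "v' \<le> 1" "v' - u' = \<beta> ^ n * (v - u)"
    using stretched[of n] by blast
  ultimately show False by linarith
qed

lemma measure_interval_diff_S_pos:
  assumes "0 \<le> u" "u < v" "v \<le> 1"
  shows "measure lebesgue ({u..v} - S) > 0"
proof -
  have "measure lebesgue ({u..v} - S) \<noteq> 0"
    using not_negligible_interval_diff_S[OF assms] interval_diff_S_lmeasurable
    by (simp add: negligible_iff_measure0)
  then show ?thesis
    using measure_nonneg[of lebesgue "{u..v} - S"] by linarith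
qed

lemma window_contains_grid_interval:
  fixes m t :: real
  assumes "0 < m" "t \<in> {m..1}"
  obtains j :: nat where "(real j + 1) * m / 2 \<le> 1"
    "{real j * m / 2 .. (real j + 1) * m / 2} \<subseteq> {t-m..t}"
proof -
  define j where "j = nat \<lceil>2 * (t - m) / m\<rceil>"
  have "2 * (t - m) / m \<le> real j" "real j < 2 * (t - m) / m + 1"
    using assms by (simp_all add: j_def ceiling_correct) linarith
  then have "t - m \<le> real j * m / 2" "(real j + 1) * m / 2 < t"
    using assms(1) by (simp_all add: field_simps)
  with assms(2) show ?thesis
    by (intro that[of j]) auto
qed

lemma measure_window_diff_S_uniformly_pos:
  assumes m: "0 < m" "m \<le> 1"
  shows "\<exists>q>0. \<forall>t\<in>{m..1}. q \<le> measure lebesgue ({t-m..t} - S)"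
proof -
  define g where "g j = measure lebesgue ({real j * m / 2 .. (real j + 1) * m / 2} - S)" for j :: nat
  define J where "J = {j. (real j + 1) * m / 2 \<le> 1}"
  have "J \<subseteq> {..nat \<lceil>2 / m\<rceil>}"
  proof
    fix j assume "j \<in> J"
    then have "real j \<le> 2 / m"
      using m by (simp add: J_def field_simps)
    then show "j \<in> {..nat \<lceil>2 / m\<rceil>}"
      by (simp add: le_nat_iff le_ceiling_iff)
  qed
  then have "finite J"
    by (rule finite_subset) simp
  moreover have "0 \<in> J"
    using m by (simp add: J_def)
  moreover have "g j > 0" if "j \<in> J" for j
    using that m unfolding g_def J_def by (intro measure_interval_diff_S_pos) auto
  ultimately have "Min (g ` J) > 0"
    by (subst Min_gr_iff) auto
  moreover have "Min (g ` J) \<le> measure lebesgue ({t-m..t} - S)" if t: "t \<in> {m..1}" for t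
  proof -
    obtain j where j: "(real j + 1) * m / 2 \<le> 1" "{real j * m / 2 .. (real j + 1) * m / 2} \<subseteq> {t-m..t}"
      using window_contains_grid_interval[OF m(1) t] .
    then have "Min (g ` J) \<le> g j"
      using \<open>finite J\<close> by (intro Min_le) (auto simp: J_def)
    also have "\<dots> \<le> measure lebesgue ({t-m..t} - S)"
      unfolding g_def
    proof (rule measure_mono_fmeasurable[OF _ _ interval_diff_S_lmeasurable])
      show "{real j * m / 2 .. (real j + 1) * m / 2} - S \<subseteq> {t-m..t} - S"
        using j(2) by auto
      show "{real j * m / 2 .. (real j + 1) * m / 2} - S \<in> sets lebesgue"
        using interval_diff_S_lmeasurable by (rule fmeasurableD)
    qed
    finally show ?thesis .
  qed
  ultimately show ?thesis by blast
qed

text \<open>A survivor lies left of the hole, on the first branch, or right of \<open>b > c\<close>, on the second;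
  either way its left neighbourhood of length \<open>m/\<beta>\<close> stays on that branch.\<close>
lemma T_map_left_nhd_of_S:
  assumes z: "z \<in> S" "z \<notin> {c, 1}" and m: "0 < m" "m \<le> z" "m \<le> b - c"
  shows "m \<le> f z" and "\<And>w. w \<in> {z - m / \<beta> .. z} \<Longrightarrow> same_branch w z"
proof -
  have "m / \<beta> \<le> m"
    using m(1) beta_gt_1 by (simp add: divide_le_eq)
  have z01: "z \<in> {0..1}"
    using z(1) survivor_set_subset by blast
  have "z \<notin> {a<..<b}"
    using z(1) by (rule survivor_set_not_in_hole)
  then consider "z < c" | "b \<le> z" "z < 1"
    using z(2) z01 a_le_c by force
  then have "m \<le> f z \<and> (\<forall>w \<in> {z - m / \<beta> .. z}. same_branch w z)"
  proof cases
    case 1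
    have "z \<le> \<beta> * z"
      using z01 beta_gt_1 by (simp add: mult_le_cancel_right1)
    then have "m \<le> f z"
      using 1 z01 m(2) alpha_nonneg T_map_left by simp
    moreover have "same_branch w z" if "w \<in> {z - m / \<beta> .. z}" for w
      using that 1 z01 m(2) \<open>m / \<beta> \<le> m\<close> by (auto simp: same_branch_def)
    ultimately show ?thesis by blast
  next
    case 2
    have "z - c \<le> \<beta> * (z - c)"
      using 2 c_lt_b beta_gt_1 by (simp add: mult_le_cancel_right1)
    moreover have "f z = \<beta> * z + \<alpha> - 1"
      using 2 c_lt_b by (intro T_map_right) auto
    then have "f z = \<beta> * (z - c)"
      unfolding right_diff_distrib using beta_c by linarith
    ultimately have "m \<le> f z"
      using 2 m(3) by simp
    moreover have "same_branch w z" if "w \<in> {z - m / \<beta> .. z}" for w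
      using that 2 c_lt_b m(3) \<open>m / \<beta> \<le> m\<close> by (auto simp: same_branch_def)
    ultimately show ?thesis by blast
  qed
  then show "m \<le> f z" and "\<And>w. w \<in> {z - m / \<beta> .. z} \<Longrightarrow> same_branch w z"
    by blast+
qed

lemma funpow_T_map_affine_left_of_S:
  assumes x: "x \<in> S" "x \<notin> breakpoint_preimages" and m: "0 < m" "m \<le> x" "m \<le> b - c"
  shows "m \<le> (f ^^ n) x \<and>
         (\<forall>y \<in> {x - m / \<beta> ^ n .. x}. (f ^^ n) x - (f ^^ n) y = \<beta> ^ n * (x - y))"
proof (induction n)
  case 0
  then show ?case using m by simp
next
  case (Suc n)
  define z where "z = (f ^^ n) x"
  have IH: "m \<le> z" "\<And>y. y \<in> {x - m / \<beta> ^ n .. x} \<Longrightarrow> z - (f ^^ n) y = \<beta> ^ n * (x - y)"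
    using Suc.IH by (simp_all add: z_def)
  have "z \<in> S"
    unfolding z_def using x(1) by (rule funpow_in_S)
  moreover have "x \<in> {0..1}"
    using x(1) survivor_set_subset by blast
  then have "z \<notin> {c, 1}"
    using x(2) by (auto simp: z_def breakpoint_preimages_def)
  ultimately have fz: "m \<le> f z" and branch: "\<And>w. w \<in> {z - m / \<beta> .. z} \<Longrightarrow> same_branch w z"
    using T_map_left_nhd_of_S IH(1) m by blast+
  have \<beta>n: "0 < \<beta> ^ n"
    using beta_pos by simp
  have "(f ^^ Suc n) x - (f ^^ Suc n) y = \<beta> ^ Suc n * (x - y)"
    if y: "y \<in> {x - m / \<beta> ^ Suc n .. x}" for y
  proof -
    have "m / \<beta> ^ Suc n \<le> m / \<beta> ^ n"
      using m(1) beta_gt_1 \<beta>n by (intro divide_left_mono) auto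
    then have diff: "z - (f ^^ n) y = \<beta> ^ n * (x - y)"
      using y by (intro IH(2)) auto
    have "\<beta> ^ n * (x - y) \<le> \<beta> ^ n * (m / \<beta> ^ Suc n)"
      using y \<beta>n by (intro mult_left_mono) auto
    also have "\<dots> = m / \<beta>"
      using \<beta>n by (simp add: field_simps)
    moreover have "0 \<le> \<beta> ^ n * (x - y)"
      using y \<beta>n by simp
    ultimately have "(f ^^ n) y \<in> {z - m / \<beta> .. z}"
      using diff by simp
    then have "f z - f ((f ^^ n) y) = \<beta> * (z - (f ^^ n) y)"
      using branch T_map_diff_same_branch by blast
    then show ?thesis
      using diff by (simp add: z_def)
  qed
  with fz show ?case
    by (simp add: z_def)
qed

text \<open>\<open>f\<^sup>n\<close> maps the window \<open>[x - m/\<beta>\<^sup>n, x]\<close> affinely onto \<open>[f\<^sup>n x - m, f\<^sup>n x]\<close>, and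
  the preimage of a point outside \<open>S\<close> lies outside \<open>S\<close>, as \<open>S\<close> is forward invariant.\<close>
lemma measure_left_window_diff_S_ge:
  assumes x: "x \<in> S" "x \<notin> breakpoint_preimages" and m: "0 < m" "m \<le> x" "m \<le> b - c"
  shows "measure lebesgue ({(f ^^ n) x - m .. (f ^^ n) x} - S) / \<beta> ^ n
           \<le> measure lebesgue ({x - m / \<beta> ^ n .. x} - S)"
proof -
  let ?\<mu> = "measure lebesgue"
  define h where "h = m / \<beta> ^ n"
  define z where "z = (f ^^ n) x"
  have \<beta>n: "\<beta> ^ n > 0"
    using beta_pos by simp
  have affine: "\<And>y. y \<in> {x - h .. x} \<Longrightarrow> z - (f ^^ n) y = \<beta> ^ n * (x - y)"
    using funpow_T_map_affine_left_of_S[OF x m, of n] by (simp add: z_def h_def)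
  define \<psi> where "\<psi> k = (1 / \<beta> ^ n) *\<^sub>R k + (x - z / \<beta> ^ n)" for k
  have "\<psi> ` ({z-m..z} - S) \<subseteq> {x-h..x} - S"
  proof
    fix t assume "t \<in> \<psi> ` ({z-m..z} - S)"
    then obtain k where k: "k \<in> {z-m..z}" "k \<notin> S" and "t = \<psi> k"
      by blast
    then have t: "t = x - (z - k) / \<beta> ^ n"
      by (simp add: \<psi>_def diff_divide_distrib)
    have "t \<in> {x-h..x}"
      using k t \<beta>n by (auto simp: h_def divide_right_mono)
    moreover have "(f ^^ n) t = k"
      using affine[OF \<open>t \<in> {x-h..x}\<close>] t beta_pos by simp
    then have "t \<notin> S"
      using funpow_in_S k(2) by metis
    ultimately show "t \<in> {x-h..x} - S" by simp
  qed
  then have "emeasure lebesgue (\<psi> ` ({z-m..z} - S)) \<le> emeasure lebesgue ({x-h..x} - S)"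
    using interval_diff_S_lmeasurable by (intro emeasure_mono) (auto simp: fmeasurable_def)
  moreover have "emeasure lebesgue (\<psi> ` ({z-m..z} - S)) = ennreal (?\<mu> ({z-m..z} - S) / \<beta> ^ n)"
    unfolding \<psi>_def[abs_def] emeasure_lebesgue_affine
    using \<beta>n interval_diff_S_lmeasurable
    by (simp add: emeasure_eq_measure2 ennreal_mult[symmetric])
  ultimately show ?thesis
    using interval_diff_S_lmeasurable by (simp add: emeasure_eq_measure2 ennreal_le_iff z_def h_def)
qed

lemma measure_S_left_window_le:
  assumes x: "x \<in> S" "x \<notin> breakpoint_preimages" and m: "0 < m" "m \<le> x" "m \<le> b - c"
    and q: "\<And>t. t \<in> {m..1} \<Longrightarrow> q \<le> measure lebesgue ({t-m..t} - S)"
  shows "measure lebesgue (S \<inter> {x - m / \<beta> ^ n .. x}) \<le> (1 - q / m) * (m / \<beta> ^ n)"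
proof -
  let ?\<mu> = "measure lebesgue"
  define h where "h = m / \<beta> ^ n"
  define z where "z = (f ^^ n) x"
  have \<beta>n: "\<beta> ^ n > 0"
    using beta_pos by simp
  have "z \<in> S"
    unfolding z_def using x(1) by (rule funpow_in_S)
  then have "z \<le> 1"
    using survivor_set_subset by fastforce
  moreover have "m \<le> z"
    using funpow_T_map_affine_left_of_S[OF x m, of n] by (simp add: z_def)
  ultimately have "q / \<beta> ^ n \<le> ?\<mu> ({z-m..z} - S) / \<beta> ^ n"
    using q[of z] \<beta>n by (simp add: divide_right_mono)
  also have "\<dots> \<le> ?\<mu> ({x-h..x} - S)"
    unfolding z_def h_def by (rule measure_left_window_diff_S_ge[OF x m])
  finally have "q / \<beta> ^ n \<le> ?\<mu> ({x-h..x} - S)" .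
  moreover have "?\<mu> (S \<inter> {x-h..x}) = h - ?\<mu> ({x-h..x} - S)"
  proof -
    have "S \<inter> {x-h..x} = {x-h..x} - ({x-h..x} - S)" by auto
    moreover have "?\<mu> ({x-h..x} - ({x-h..x} - S)) = ?\<mu> {x-h..x} - ?\<mu> ({x-h..x} - S)"
      using interval_diff_S_lmeasurable[of "x-h" x]
      by (intro measurable_measure_Diff) (simp_all add: fmeasurableD)
    moreover have "?\<mu> {x-h..x} = h"
      using m \<beta>n by (simp add: h_def)
    ultimately show ?thesis by simp
  qed
  ultimately have "?\<mu> (S \<inter> {x-h..x}) \<le> h - q / \<beta> ^ n"
    by linarith
  also have "\<dots> = (1 - q / m) * h"
  proof -
    have "q / m * h = q / \<beta> ^ n"
      using m(1) by (simp add: h_def)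
    then show ?thesis
      by (simp add: left_diff_distrib)
  qed
  finally show ?thesis
    by (simp add: h_def)
qed

lemma S_left_density_le:
  assumes x: "x \<in> S" "x \<notin> breakpoint_preimages" and m: "0 < m" "m \<le> x" "m \<le> b - c"
    and q: "\<And>t. t \<in> {m..1} \<Longrightarrow> q \<le> measure lebesgue ({t-m..t} - S)" and "0 < d"
  shows "\<exists>h. 0 < h \<and> h < d \<and> measure lebesgue (S \<inter> {x-h..x}) \<le> (1 - q / m) * h"
proof -
  obtain n where n: "(1 / \<beta>) ^ n < d / m"
    using real_arch_pow_inv[of "d / m" "1 / \<beta>"] \<open>0 < d\<close> m(1) beta_gt_1 by auto
  have "m / \<beta> ^ n = m * (1 / \<beta>) ^ n"
    by (simp add: power_one_over)
  also have "\<dots> < m * (d / m)"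
    using n m(1) by (rule mult_strict_left_mono)
  also have "\<dots> = d"
    using m(1) by simp
  finally have "m / \<beta> ^ n < d" .
  moreover have "0 < m / \<beta> ^ n"
    using m(1) beta_pos by simp
  ultimately show ?thesis
    using measure_S_left_window_le[OF x m q, of n] by blast
qed

definition S_regular :: "real \<Rightarrow> real set" where
  "S_regular m\<^sub>0 = {x \<in> S. m\<^sub>0 \<le> x \<and> x \<notin> breakpoint_preimages}"

lemma S_regular_lmeasurable: "S_regular m\<^sub>0 \<in> lmeasurable"
proof (rule fmeasurableI2[of "{0..1}"])
  have "breakpoint_preimages \<in> sets borel"
    using null_setsD2[OF countable_imp_null_set_lborel[OF countable_breakpoint_preimages]] by simp
  then have "S \<inter> {m\<^sub>0..} - breakpoint_preimages \<in> sets borel"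
    using S_sets_borel by (intro sets.Diff sets.Int) auto
  moreover have "S_regular m\<^sub>0 = S \<inter> {m\<^sub>0..} - breakpoint_preimages"
    by (auto simp: S_regular_def)
  ultimately show "S_regular m\<^sub>0 \<in> sets lebesgue"
    by (simp add: sets_completionI_sets)
  show "S_regular m\<^sub>0 \<subseteq> {0..1}"
    unfolding S_regular_def using survivor_set_subset by blast
qed simp

lemma negligible_S_regular:
  assumes "0 < m\<^sub>0"
  shows "negligible (S_regular m\<^sub>0)"
proof -
  define m where "m = min m\<^sub>0 (min (b - c) 1)"
  have m: "0 < m" "m \<le> 1" "m \<le> b - c" "m \<le> m\<^sub>0"
    using assms c_lt_b by (auto simp: m_def)
  obtain q where "q > 0" and q: "\<And>t. t \<in> {m..1} \<Longrightarrow> q \<le> measure lebesgue ({t-m..t} - S)"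
    using measure_window_diff_S_uniformly_pos[OF m(1,2)] by blast
  define \<theta> where "\<theta> = max 0 (1 - q / m)"
  have \<theta>: "0 \<le> \<theta>" "\<theta> < 1"
    using \<open>q > 0\<close> m by (auto simp: \<theta>_def)
  show ?thesis
  proof (rule negligible_of_left_density_le[OF S_regular_lmeasurable \<theta>])
    fix x d :: real assume "x \<in> S_regular m\<^sub>0" and "d > 0"
    then have x: "x \<in> S" "x \<notin> breakpoint_preimages" "m \<le> x"
      using m(4) by (auto simp: S_regular_def)
    obtain h where h: "0 < h" "h < d" "measure lebesgue (S \<inter> {x-h..x}) \<le> (1 - q / m) * h"
      using S_left_density_le[OF x(1,2) m(1) x(3) m(3) q \<open>d > 0\<close>] by blast
    have "measure lebesgue (S_regular m\<^sub>0 \<inter> {x-h..x}) \<le> measure lebesgue (S \<inter> {x-h..x})"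
    proof (rule measure_mono_fmeasurable)
      show "S_regular m\<^sub>0 \<inter> {x-h..x} \<subseteq> S \<inter> {x-h..x}"
        by (auto simp: S_regular_def)
      show "S_regular m\<^sub>0 \<inter> {x-h..x} \<in> sets lebesgue"
        using fmeasurableD[OF S_regular_lmeasurable] by (rule sets.Int) simp
      show "S \<inter> {x-h..x} \<in> lmeasurable"
        by (rule S_inter_interval_lmeasurable)
    qed
    also have "\<dots> \<le> (1 - q / m) * h"
      by (rule h(3))
    also have "\<dots> \<le> \<theta> * h"
      using h(1) by (intro mult_right_mono) (auto simp: \<theta>_def)
    finally show "\<exists>h. 0 < h \<and> h < d \<and> measure lebesgue (S_regular m\<^sub>0 \<inter> {x-h..x}) \<le> \<theta> * h"
      using h(1,2) by blast
  qed
qed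

lemma negligible_S: "negligible S"
proof -
  have "S \<subseteq> {0} \<union> breakpoint_preimages \<union> (\<Union>j. S_regular (1 / Suc j))"
  proof
    fix x assume x: "x \<in> S"
    show "x \<in> {0} \<union> breakpoint_preimages \<union> (\<Union>j. S_regular (1 / Suc j))"
    proof (cases "x = 0 \<or> x \<in> breakpoint_preimages")
      case False
      have "x \<in> {0..1}"
        using x survivor_set_subset by blast
      with False have "0 < x" by simp
      then obtain j where "inverse (Suc j) < x"
        using reals_Archimedean by blast
      then have "1 / Suc j \<le> x"
        by (simp add: inverse_eq_divide)
      then have "x \<in> S_regular (1 / Suc j)"
        using x False by (simp add: S_regular_def)
      then show ?thesis by blast
    qed auto
  qed
  moreover have "{0} \<union> breakpoint_preimages \<in> null_sets lborel"
    using countable_breakpoint_preimages by (intro countable_imp_null_set_lborel) simp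
  then have "{0} \<union> breakpoint_preimages \<in> null_sets lebesgue"
    by (rule null_sets_completionI)
  then have "negligible ({0} \<union> breakpoint_preimages)"
    by (simp only: negligible_iff_null_sets)
  moreover have "negligible (\<Union>j. S_regular (1 / Suc j))"
    by (intro negligible_Union_nat negligible_S_regular) simp
  ultimately show ?thesis
    by (meson negligible_Un negligible_subset)
qed

end

section \<open>Local constancy almost everywhere\<close>

context linear_mod_one begin

lemma null_sets_survivor_set:
  assumes "a \<le> c" "c < b"
  shows "survivor_set f {a<..<b} \<in> null_sets lborel"
proof -
  interpret linear_mod_one_hole \<beta> \<alpha> a b
    using assms by unfold_locales
  have "S \<in> null_sets lebesgue"
    using negligible_S by (simp only: negligible_iff_null_sets)
  moreover have "S \<in> sets lborel"
    using S_sets_borel by simp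
  ultimately show ?thesis
    using null_sets_completion_iff by blast
qed

lemma survivor_set_locally_constant_above_c:
  assumes b: "b \<in> {c..1}" "b \<notin> breakpoint_preimages"
    and "b\<^sub>0 \<le> b" "b \<notin> survivor_set f {a<..<b\<^sub>0}"
  shows "\<exists>e>0. \<forall>y\<in>{c..1}. \<bar>y - b\<bar> < e \<longrightarrow> survivor_set f {a<..<y} = survivor_set f {a<..<b}"
proof -
  have b01: "b \<in> {0..1}"
    using b(1) c_pos by auto
  have "survivor_set f {a<..<b} \<subseteq> survivor_set f {a<..<b\<^sub>0}"
    using \<open>b\<^sub>0 \<le> b\<close> by (intro survivor_set_antimono) auto
  with assms(4) have "b \<notin> survivor_set f {a<..<b}"
    by blast
  then obtain e where "e > 0"
    and "\<forall>y\<in>{0..1}. \<bar>y - b\<bar> < e \<longrightarrow> survivor_set f {a<..<y} = survivor_set f {a<..<b}"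
    using survivor_set_locally_constant[OF b01 b(2)] by blast
  moreover have "{c..1} \<subseteq> {0..1}"
    using c_pos by auto
  ultimately show ?thesis
    by blast
qed

lemma AE_survivor_set_locally_constant:
  assumes "a \<le> c"
  shows "AE b in lborel. b \<in> {c..1} \<longrightarrow>
           (\<exists>e>0. \<forall>y\<in>{c..1}. \<bar>y - b\<bar> < e \<longrightarrow> survivor_set f {a<..<y} = survivor_set f {a<..<b})"
proof (rule AE_I')
  define N where "N = breakpoint_preimages \<union> (\<Union>j. survivor_set f {a<..<c + 1 / Suc j})"
  have "survivor_set f {a<..<c + 1 / Suc j} \<in> null_sets lborel" for j
    using assms by (intro null_sets_survivor_set) auto
  then show "N \<in> null_sets lborel"
    unfolding N_def
    by (rule null_sets.Un[OF countable_imp_null_set_lborel[OF countable_breakpoint_preimages] null_sets_UN])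
  show "{b \<in> space lborel. \<not> (b \<in> {c..1} \<longrightarrow> (\<exists>e>0. \<forall>y\<in>{c..1}. \<bar>y - b\<bar> < e \<longrightarrow>
          survivor_set f {a<..<y} = survivor_set f {a<..<b}))} \<subseteq> N"
  proof
    fix b assume "b \<in> {b \<in> space lborel. \<not> (b \<in> {c..1} \<longrightarrow> (\<exists>e>0. \<forall>y\<in>{c..1}. \<bar>y - b\<bar> < e \<longrightarrow>
          survivor_set f {a<..<y} = survivor_set f {a<..<b}))}"
    then have b: "b \<in> {c..1}"
      and not_const: "\<not> (\<exists>e>0. \<forall>y\<in>{c..1}. \<bar>y - b\<bar> < e \<longrightarrow>
          survivor_set f {a<..<y} = survivor_set f {a<..<b})"
      by simp_all
    show "b \<in> N"
    proof (rule ccontr)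
      assume "b \<notin> N"
      then have not_breakpoint: "b \<notin> breakpoint_preimages"
        and survives_not: "\<And>j. b \<notin> survivor_set f {a<..<c + 1 / Suc j}"
        by (simp_all add: N_def)
      have "b \<in> {0..1}"
        using b c_pos by auto
      then have "(f ^^ 0) b \<notin> {c, 1}"
        using not_breakpoint unfolding breakpoint_preimages_def by blast
      then obtain j where "inverse (Suc j) < b - c"
        using b reals_Archimedean[of "b - c"] by auto
      then have "c + 1 / Suc j \<le> b"
        by (simp add: inverse_eq_divide)
      with b not_breakpoint survives_not[of j] show False
        using survivor_set_locally_constant_above_c not_const by blast
    qed
  qed
qed

lemma AE_hausdorff_dim_survivor_set_locally_constant:
  assumes "a \<le> c"
  shows "AE b in lborel. b \<in> {c..1} \<longrightarrow> (\<exists>e>0. \<forall>y\<in>{c..1}. \<bar>y - b\<bar> < e \<longrightarrow>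
           hausdorff_dim (survivor_set f {a<..<y}) = hausdorff_dim (survivor_set f {a<..<b}))"
  using AE_survivor_set_locally_constant[OF assms]
proof (rule eventually_mono, intro impI)
  fix b assume "b \<in> {c..1} \<longrightarrow> (\<exists>e>0. \<forall>y\<in>{c..1}. \<bar>y - b\<bar> < e \<longrightarrow>
    survivor_set f {a<..<y} = survivor_set f {a<..<b})" and "b \<in> {c..1}"
  then obtain e where "e > 0" and e: "\<And>y. y \<in> {c..1} \<Longrightarrow> \<bar>y - b\<bar> < e \<Longrightarrow>
    survivor_set f {a<..<y} = survivor_set f {a<..<b}"
    by blast
  then show "\<exists>e>0. \<forall>y\<in>{c..1}. \<bar>y - b\<bar> < e \<longrightarrow>
    hausdorff_dim (survivor_set f {a<..<y}) = hausdorff_dim (survivor_set f {a<..<b})"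
    by (intro exI[of _ e] conjI ballI impI) simp_all
qed

end

lemma hausdorff_dim_survivor_set_antimono:
  "b\<^sub>1 \<le> b\<^sub>2 \<Longrightarrow> hausdorff_dim (survivor_set f {a<..<b\<^sub>2}) \<le> hausdorff_dim (survivor_set f {a<..<b\<^sub>1})"
  by (intro hausdorff_dim_mono survivor_set_antimono survivor_set_subset) auto

theorem corollary1p4:
  fixes \<beta> \<alpha> a :: real
  assumes "1 < \<beta>" "\<beta> < 2" "0 \<le> \<alpha>" "\<alpha> \<le> 2 - \<beta>"
    and "0 \<le> a" "a \<le> (1 - \<alpha>) / \<beta>"
  defines "c \<equiv> (1 - \<alpha>) / \<beta>"
    and "\<eta> \<equiv> (\<lambda>b. hausdorff_dim (survivor_set (T_map \<beta> \<alpha>) {a<..<b}))"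
  shows "(\<forall>b1 \<in> {c..1}. \<forall>b2 \<in> {c..1}. b1 \<le> b2 \<longrightarrow> \<eta> b2 \<le> \<eta> b1)
       \<and> (AE b in lborel. b \<in> {c..1} \<longrightarrow>
            (\<exists>\<epsilon>>0. \<forall>y \<in> {c..1}. \<bar>y - b\<bar> < \<epsilon> \<longrightarrow> \<eta> y = \<eta> b))"
proof -
  have T: "linear_mod_one \<beta> \<alpha>"
    using assms(1,3,4) by unfold_locales
  have c_eq: "c = linear_mod_one.c \<beta> \<alpha>"
    unfolding c_def linear_mod_one.c_def[OF T] ..
  have "a \<le> linear_mod_one.c \<beta> \<alpha>"
    using assms(6) unfolding c_eq[symmetric] c_def .
  from linear_mod_one.AE_hausdorff_dim_survivor_set_locally_constant[OF T this]
  have "AE b in lborel. b \<in> {c..1} \<longrightarrow> (\<exists>\<epsilon>>0. \<forall>y\<in>{c..1}. \<bar>y - b\<bar> < \<epsilon> \<longrightarrow> \<eta> y = \<eta> b)"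
    unfolding c_eq \<eta>_def .
  moreover have "\<eta> b\<^sub>2 \<le> \<eta> b\<^sub>1" if "b\<^sub>1 \<le> b\<^sub>2" for b\<^sub>1 b\<^sub>2
    unfolding \<eta>_def using that by (rule hausdorff_dim_survivor_set_antimono)
  ultimately show ?thesis
    by blast
qed

end
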